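(* For every integer $B>2$ and every $\varepsilon\in[0,1]$, $$M_B(\varepsilon\mid\mathrm{JamesStein})\le\varepsilon+\frac2B.$$
   Context: The positive-part James–Stein denoiser on $\mathbb R^B$ is $\eta^{JS}(y)=\big(1-(B-2)/\|y\|_2^2\big)_+\,y$. Let $\mathcal F_{\varepsilon,B}=\{\nu\in\mathcal P(\mathbb R^B):\nu(\{0\})\ge1-\varepsilon\}$ and $$M_B(\varepsilon\mid\mathrm{JamesStein})=\frac1B\sup_{\nu\in\mathcal F_{\varepsilon,B}}\mathbb E_\nu\|\mathbf X-\eta^{JS}(\mathbf X+\mathbf Z)\|_2^2,$$ with $\mathbf X\sim\nu$ independent of $\mathbf Z\sim\mathsf N(0,I_{B\times B})$. *)

theory Defs
  imports "HOL-Probability.Probability"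
begin

text \<open>Dimension B is CARD('n); vectors in R^B are of type real^'n.\<close>

definition james_stein :: "real^'n \<Rightarrow> real^'n" where
  "james_stein y = max 0 (1 - (real CARD('n) - 2) / (norm y)^2) *\<^sub>R y"

definition std_gauss :: "(real^'n) measure" where
  "std_gauss = density lborel
     (\<lambda>z. ennreal ((2 * pi) powr (- real CARD('n) / 2) * exp (- ((norm z)\<^sup>2) / 2)))"

definition sparse_priors :: "real \<Rightarrow> (real^'n::finite) measure set" where
  "sparse_priors eps = {\<nu>. prob_space \<nu> \<and> sets \<nu> = sets borel \<and> measure \<nu> {0} \<ge> 1 - eps}"

definition js_risk :: "(real^'n::finite) measure \<Rightarrow> ennreal" where
  "js_risk \<nu> = (\<integral>\<^sup>+ x. (\<integral>\<^sup>+ z. ennreal ((norm (x - james_stein (x + z)))^2) \<partial>std_gauss) \<partial>\<nu>)"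

definition minimax_JS :: "real \<Rightarrow> 'n::finite itself \<Rightarrow> ennreal" where
  "minimax_JS eps _ = ennreal (1 / real CARD('n)) * (SUP \<nu>\<in>(sparse_priors eps :: (real^'n) measure set). js_risk \<nu>)"

end

theory Submission
  imports Defs
begin

(* Write B = CARD('n), c = B - 2 and t(u) = min 1 (c/u), so that james_stein y = (1 - t |y|^2) y.
   For a fixed signal x and Y ~ N(x, I) the loss expands as
     |x - eta Y|^2 = |Y - x|^2 - 2 t(|Y|^2) Y.(Y - x) + t(|Y|^2)^2 |Y|^2 .
   Stein's identity for radial fields, E[t(|Y|^2) Y.(Y - x)] = E[B t(|Y|^2) + 2 |Y|^2 t'(|Y|^2)],
   is obtained without integration by parts: the integral of y |-> Phi(r y) is r^(-B) times the
   integral of Phi, and differentiating at r = 1 under the integral sign (dominated convergence)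
   gives the identity.  This yields Stein's unbiased risk estimate
     r(x) = B + E[t^2 |Y|^2 - 2 B t - 4 |Y|^2 t'],
   whose integrand is pointwise nonpositive, so r(x) <= B; at x = 0, subtracting the mean-zero
   Stein term makes the integrand <= -c, so r(0) <= 2.  A prior with mass >= 1 - eps at 0
   therefore has Bayes risk <= 2 + B eps, and dividing by B gives the theorem. *)

lemma norm_sq_half: "(norm (p::'a::real_normed_vector))^2 / 2 - (norm q)^2 \<le> (norm (p - q))^2"
proof -
  have "norm p \<le> norm (p - q) + norm q" by (metis norm_triangle_sub add.commute)
  then have "(norm p)^2 \<le> (norm (p - q) + norm q)^2" by (simp add: power_mono)
  also have "\<dots> \<le> 2 * (norm (p - q))^2 + 2 * (norm q)^2"
    using zero_le_power2[of "norm (p - q) - norm q"] unfolding power2_sum power2_diff by linarith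
  finally show ?thesis by simp
qed

lemma norm_scale_diff_sq:
  fixes x y :: "'a::real_inner"
  shows "(norm (r *\<^sub>R y - x))^2 = r^2 * (norm y)^2 - 2 * r * (x \<bullet> y) + (norm x)^2"
  unfolding power2_norm_eq_inner
  by (simp add: inner_diff_left inner_diff_right inner_commute power2_eq_square algebra_simps)

lemma inner_le_bound: "\<bar>(y::'a::real_inner) \<bullet> (y - x)\<bar> \<le> (2 + (norm x)^2) * (1 + (norm y)^2)"
proof -
  have "\<bar>y \<bullet> (y - x)\<bar> \<le> norm y * norm (y - x)" by (rule Cauchy_Schwarz_ineq2)
  also have "\<dots> \<le> norm y * (norm y + norm x)" by (intro mult_left_mono norm_triangle_ineq4) auto
  also have "\<dots> = (norm y)^2 + norm x * norm y" by (simp add: power2_eq_square algebra_simps)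
  also have "norm x * norm y \<le> (norm x)^2 + (norm y)^2"
    using sum_squares_bound[of "norm x" "norm y"] zero_le_power2[of "norm x"] zero_le_power2[of "norm y"]
      mult_nonneg_nonneg[of "norm x" "norm y"] by linarith
  finally have "\<bar>y \<bullet> (y - x)\<bar> \<le> 2 * (norm y)^2 + (norm x)^2" by simp
  also have "\<dots> \<le> (2 + (norm x)^2) * (1 + (norm y)^2)"
    using mult_nonneg_nonneg[OF zero_le_power2[of "norm x"] zero_le_power2[of "norm y"]]
    by (simp add: algebra_simps)
  finally show ?thesis .
qed

lemma exp_diff_bound: "\<bar>exp (- (a::real)) - exp (- b)\<bar> \<le> \<bar>a - b\<bar> * exp (- min a b)"
proof -
  have *: "exp (- a) - exp (- b) \<le> (b - a) * exp (- a)" if "a \<le> b" for a b :: real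
  proof -
    have "exp (- b) = exp (- a) * exp (- (b - a))" by (simp add: exp_add[symmetric])
    moreover have "1 - (b - a) \<le> exp (- (b - a))"
      using exp_ge_add_one_self[of "a - b"] by (simp only: minus_diff_eq)
    ultimately have "exp (- b) \<ge> exp (- a) * (1 - (b - a))" by (simp add: mult_left_mono)
    then show ?thesis by (simp add: algebra_simps)
  qed
  show ?thesis
    using *[of a b] *[of b a] by (cases "a \<le> b") (auto simp: min_def abs_if)
qed

lemma deriv_seq:
  assumes "(f has_real_derivative d) (at a)"
  shows "(\<lambda>n. (f (a + 1 / real (Suc n)) - f a) / (1 / real (Suc n))) \<longlonglongrightarrow> d"
proof -
  have lim: "((\<lambda>h. (f (a + h) - f a) / h) \<longlongrightarrow> d) (at 0)"
    using assms by (simp add: DERIV_def)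
  have seq: "(\<lambda>n. 1 / real (Suc n)) \<longlonglongrightarrow> 0" by (rule LIMSEQ_Suc[OF lim_const_over_n])
  have "\<forall>X. (\<forall>i. X i \<noteq> 0) \<longrightarrow> X \<longlonglongrightarrow> 0 \<longrightarrow> (\<lambda>n. (f (a + X n) - f a) / X n) \<longlonglongrightarrow> d"
    using lim unfolding tendsto_at_iff_sequentially[where s=UNIV] by (auto simp: o_def)
  from this[rule_format, of "\<lambda>n. 1 / real (Suc n)"] seq show ?thesis by simp
qed

(* Spheres are Lebesgue null sets, so a kink of a radial profile is invisible to integrals. *)
lemma AE_not_sphere: "AE y in lborel. norm (y::'a::euclidean_space) \<noteq> r"
proof -
  from negligible_sphere[of "0::'a" r] have N: "sphere (0::'a) r \<in> null_sets lborel"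
    by (auto simp: null_sets_completion_iff negligible_iff_null_sets negligible_convex_frontier)
  show ?thesis by (rule AE_I'[OF N]) auto
qed

(* The unnormalised Gaussian kernel centred at x: the density of N(x, I) up to (2 pi)^(B/2). *)
definition gauss_kernel :: "'a::real_normed_vector \<Rightarrow> 'a \<Rightarrow> real" where
  "gauss_kernel x y = exp (- ((norm (y - x))^2) / 2)"

lemma gauss_kernel_pos: "gauss_kernel x y > 0"
  by (simp add: gauss_kernel_def)

lemma borel_measurable_gauss_kernel [measurable]:
  fixes f :: "'b \<Rightarrow> 'a::euclidean_space"
  assumes [measurable]: "f \<in> borel_measurable M"
  shows "(\<lambda>y. gauss_kernel x (f y)) \<in> borel_measurable M"
  unfolding gauss_kernel_def by measurable

lemma norm_sq_Basis: "(norm (y::'a::euclidean_space))^2 = (\<Sum>b\<in>Basis. (y \<bullet> b)^2)"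
  unfolding power2_norm_eq_inner by (subst euclidean_inner) (simp add: power2_eq_square)

lemma normal_density_prod:
  fixes x y :: "'a::euclidean_space" assumes "\<sigma> > 0"
  shows "(\<Prod>b\<in>Basis. normal_density (x\<bullet>b) \<sigma> (y\<bullet>b)) =
     (1/sqrt(2 * pi * \<sigma>^2))^DIM('a)  *  exp(- ((norm (y - x))^2)/(2 * \<sigma>^2))"
proof -
  have "(\<Prod>b\<in>Basis. normal_density (x\<bullet>b) \<sigma> (y\<bullet>b)) =
     (1/sqrt(2 * pi * \<sigma>^2))^DIM('a)  *  (\<Prod>b\<in>Basis. exp (- (((y-x)\<bullet>b)^2)/(2 * \<sigma>^2)))"
    by (simp only: normal_density_def inner_diff_left prod.distrib prod_constant)
  also have "(\<Prod>b\<in>Basis. exp (- (((y-x)\<bullet>b)^2)/(2 * \<sigma>^2))) = exp (\<Sum>b\<in>Basis. - (((y-x)\<bullet>b)^2)/(2 * \<sigma>^2))"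
    by (simp add: exp_sum)
  also have "(\<Sum>b\<in>Basis. - (((y-x)\<bullet>b)^2)/(2 * \<sigma>^2)) = - ((norm (y - x))^2)/(2 * \<sigma>^2)"
    by (simp add: norm_sq_Basis[of "y-x"] sum_divide_distrib sum_negf)
  finally show ?thesis by simp
qed

lemma nn_integral_gaussian_density:
  fixes x :: "'a::euclidean_space" assumes "\<sigma> > 0"
  shows "(\<integral>\<^sup>+y. ennreal ((1/sqrt(2 * pi * \<sigma>^2))^DIM('a) * exp(- ((norm (y - x))^2)/(2 * \<sigma>^2))) \<partial>lborel) = 1"
proof -
  have "(\<integral>\<^sup>+y. ennreal ((1/sqrt(2 * pi * \<sigma>^2))^DIM('a) * exp(- ((norm (y - x))^2)/(2 * \<sigma>^2))) \<partial>lborel)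
     = (\<integral>\<^sup>+y. (\<Prod>b\<in>Basis. ennreal (normal_density (x\<bullet>b) \<sigma> (y\<bullet>b))) \<partial>lborel)"
    by (simp add: normal_density_prod[OF assms] prod_ennreal)
  also have "\<dots> = (\<Prod>b\<in>(Basis::'a set). (\<integral>\<^sup>+s. ennreal (normal_density (x\<bullet>b) \<sigma> s) \<partial>lborel))"
    by (rule nn_integral_lborel_prod) auto
  also have "\<dots> = 1"
  proof (rule prod.neutral, intro ballI)
    fix b :: 'a
    show "(\<integral>\<^sup>+s. ennreal (normal_density (x\<bullet>b) \<sigma> s) \<partial>lborel) = 1"
      using prob_space_normal_density[OF assms, of "x\<bullet>b"]
      by (simp add: prob_space_def prob_space_axioms_def emeasure_density)
  qed
  finally show ?thesis .
qed

lemma integrable_gaussian: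
  fixes x :: "'a::euclidean_space" assumes "\<sigma> > 0"
  shows "integrable lborel (\<lambda>y. exp (- ((norm (y - x))^2) / (2 * \<sigma>^2)))"
proof (rule integrableI_bounded)
  define K where "K = (1/sqrt(2 * pi * \<sigma>^2))^DIM('a)"
  have K: "K > 0" using assms by (simp add: K_def)
  have "(\<integral>\<^sup>+y. ennreal (norm (exp (- ((norm (y - x))^2) / (2 * \<sigma>^2)))) \<partial>lborel)
      = (\<integral>\<^sup>+y. ennreal (1/K) * ennreal (K * exp (- ((norm (y - x))^2) / (2 * \<sigma>^2))) \<partial>lborel)"
    using K by (intro nn_integral_cong) (simp add: ennreal_mult[symmetric])
  also have "\<dots> = ennreal (1/K) * 1"
    using nn_integral_gaussian_density[OF assms, of x] by (subst nn_integral_cmult) (auto simp: K_def)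
  finally show "(\<integral>\<^sup>+y. ennreal (norm (exp (- ((norm (y - x))^2) / (2 * \<sigma>^2)))) \<partial>lborel) < \<infinity>"
    by simp
qed simp

lemma integrable_gauss_kernel: "integrable lborel (gauss_kernel (x::'a::euclidean_space))"
  using integrable_gaussian[of 1 x] by (simp add: gauss_kernel_def[abs_def])

lemma gauss_kernel_normalization:
  "(2 * pi) powr (- real DIM('a) / 2) * (\<integral>y. gauss_kernel (x::'a::euclidean_space) y \<partial>lborel) = 1"
proof -
  define K where "K = (1/sqrt(2 * pi * 1^2))^DIM('a)"
  have "ennreal (\<integral>y. K * gauss_kernel x y \<partial>lborel) = 1"
    using nn_integral_gaussian_density[of 1 x] integrable_gauss_kernel[of x]
    by (subst nn_integral_eq_integral[symmetric]) (auto simp: K_def gauss_kernel_def[abs_def])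
  moreover have "(2 * pi) powr (- real DIM('a) / 2) = K"
  proof -
    have "(2 * pi) powr (- real DIM('a) / 2) = inverse (((2 * pi) powr (1/2)) powr real DIM('a))"
      by (simp add: powr_powr powr_minus)
    also have "(2 * pi) powr (1/2) = sqrt (2 * pi)" by (simp add: powr_half_sqrt)
    also have "sqrt (2 * pi) powr real DIM('a) = sqrt (2 * pi) ^ DIM('a)" by (simp add: powr_realpow)
    finally show ?thesis by (simp add: K_def power_one_over inverse_eq_divide)
  qed
  ultimately show ?thesis by simp
qed

lemma integral_shift:
  fixes f :: "'a::euclidean_space \<Rightarrow> real"
  assumes [measurable]: "f \<in> borel_measurable borel"
  shows "(\<integral>y. f (t + y) \<partial>lborel) = (\<integral>y. f y \<partial>lborel)"
  using integral_distr[of "(+) t" lborel borel f] lborel_distr_plus[of t] by simp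

lemma nn_integral_shift:
  fixes f :: "'a::euclidean_space \<Rightarrow> ennreal"
  assumes [measurable]: "f \<in> borel_measurable borel"
  shows "(\<integral>\<^sup>+y. f (t + y) \<partial>lborel) = (\<integral>\<^sup>+y. f y \<partial>lborel)"
  using nn_integral_distr[of "(+) t" lborel borel f] lborel_distr_plus[of t] by simp

lemma integral_dilation:
  fixes f :: "'a::euclidean_space \<Rightarrow> real"
  assumes [measurable]: "f \<in> borel_measurable borel" and c: "c > 0"
  shows "(\<integral>y. f (c *\<^sub>R y) \<partial>lborel) = inverse (c^DIM('a)) * (\<integral>y. f y \<partial>lborel)"
proof -
  have "(\<integral>y. f y \<partial>lborel) = (\<integral>y. f y \<partial>density (distr lborel borel (\<lambda>x. 0 + c *\<^sub>R x)) (\<lambda>_. ennreal (\<bar>c\<bar>^DIM('a))))"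
    using lborel_affine[of c "0::'a"] c by simp
  also have "\<dots> = (\<integral>y. \<bar>c\<bar>^DIM('a) * f y \<partial>distr lborel borel (\<lambda>x. 0 + c *\<^sub>R x))"
    by (subst integral_density) auto
  also have "\<dots> = (\<integral>y. \<bar>c\<bar>^DIM('a) * f (0 + c *\<^sub>R y) \<partial>lborel)"
    by (subst integral_distr) auto
  finally show ?thesis using c by simp
qed

lemma gauss_kernel_dilation_bound:
  fixes x y :: "'a::real_normed_vector" assumes "1 \<le> \<mu>"
  shows "gauss_kernel x (\<mu> *\<^sub>R y) \<le> exp ((norm x)^2 / 2) * exp (- ((norm y)^2) / 4)"
proof -
  have "(norm y)^2 \<le> (norm (\<mu> *\<^sub>R y))^2"
    using assms by (simp add: power_mono abs_if mult_le_cancel_right1 power_mult_distrib)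
  then have "(norm y)^2 / 2 - (norm x)^2 \<le> (norm (\<mu> *\<^sub>R y - x))^2"
    using norm_sq_half[of "\<mu> *\<^sub>R y" x] by linarith
  then have "- ((norm (\<mu> *\<^sub>R y - x))^2) / 2 \<le> (norm x)^2 / 2 + (- ((norm y)^2) / 4)" by linarith
  then show ?thesis by (simp add: gauss_kernel_def exp_add[symmetric])
qed

lemma integrable_gaussian_envelope:
  fixes h :: "'a::euclidean_space \<Rightarrow> real"
  assumes [measurable]: "h \<in> borel_measurable borel"
    and bound: "\<And>y. \<bar>h y\<bar> \<le> A * (1 + (norm y)^2) * exp (- ((norm y)^2) / 4)"
  shows "integrable lborel h"
proof (rule Bochner_Integration.integrable_bound)
  show "integrable lborel (\<lambda>y::'a. 8 * A * exp (- ((norm (y - 0))^2) / (2 * 2^2)))"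
    using integrable_gaussian[of 2 "0::'a"] by (intro integrable_mult_right) simp
  show "AE y in lborel. norm (h y) \<le> norm (8 * A * exp (- ((norm (y - 0))^2) / (2 * 2^2)))"
  proof (intro AE_I2)
    fix y :: 'a
    define u where "u = (norm y)^2"
    have pos: "0 < (1 + (norm y)^2) * exp (- ((norm y)^2) / 4)" by (simp add: add_pos_nonneg)
    have "0 \<le> A * ((1 + (norm y)^2) * exp (- ((norm y)^2) / 4))"
      using bound[of y] by (metis abs_ge_zero order_trans mult.assoc)
    then have A: "A \<ge> 0" using pos by (simp add: zero_le_mult_iff)
    have "1 + u \<le> 8 * exp (u/8)"
      using exp_ge_add_one_self[of "u/8"] zero_le_power2[of "norm y"] unfolding u_def by linarith
    then have "(1 + u) * exp (- u / 4) \<le> 8 * exp (u/8) * exp (- u/4)" by simp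
    also have "\<dots> = 8 * exp (- u / 8)" by (simp add: exp_add[symmetric])
    finally have "A * ((1 + u) * exp (- u / 4)) \<le> A * (8 * exp (- u / 8))"
      using A by (intro mult_left_mono) auto
    then show "norm (h y) \<le> norm (8 * A * exp (- ((norm (y - 0))^2) / (2 * 2^2)))"
      using bound[of y] A by (simp add: u_def mult.assoc)
  qed
qed simp

lemma integrable_quadratic_growth:
  fixes x :: "'a::euclidean_space" and P :: "'a \<Rightarrow> real"
  assumes [measurable]: "P \<in> borel_measurable borel" and bound: "\<And>y. \<bar>P y\<bar> \<le> M * (1 + (norm y)^2)"
  shows "integrable lborel (\<lambda>y. P y * gauss_kernel x y)"
proof (rule integrable_gaussian_envelope[where A="M * exp ((norm x)^2 / 2)"])
  fix y :: 'a
  have "\<bar>P y * gauss_kernel x y\<bar> = \<bar>P y\<bar> * gauss_kernel x y"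
    using gauss_kernel_pos[of x y] by (simp add: abs_mult)
  also have "\<dots> \<le> (M * (1 + (norm y)^2)) * (exp ((norm x)^2 / 2) * exp (- ((norm y)^2) / 4))"
    using bound[of y] gauss_kernel_dilation_bound[of 1 x y] gauss_kernel_pos[of x y]
    by (intro mult_mono) auto
  finally show "\<bar>P y * gauss_kernel x y\<bar> \<le> M * exp ((norm x)^2 / 2) * (1 + (norm y)^2) * exp (- ((norm y)^2) / 4)"
    by (simp add: algebra_simps)
qed measurable

lemma gauss_kernel_dilation_increment:
  fixes x y :: "'a::real_inner"
  assumes h: "0 < h" "h \<le> 1"
  shows "\<bar>gauss_kernel x ((1 + h) *\<^sub>R y) - gauss_kernel x y\<bar>
           \<le> h * (2 * (norm y)^2 + (norm x)^2 / 2) * (exp ((norm x)^2 / 2) * exp (- ((norm y)^2) / 4))"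
proof -
  define u where "u = (norm y)^2"
  define e where "e = exp ((norm x)^2 / 2) * exp (- u / 4)"
  define a1 where "a1 = (norm ((1 + h) *\<^sub>R y - x))^2 / 2"
  define a2 where "a2 = (norm (1 *\<^sub>R y - x))^2 / 2"
  have u0: "0 \<le> u" by (simp add: u_def)
  have "exp (- a1) \<le> e" "exp (- a2) \<le> e"
    using gauss_kernel_dilation_bound[of "1 + h" x y] gauss_kernel_dilation_bound[of 1 x y] h
    by (auto simp: gauss_kernel_def a1_def a2_def e_def u_def)
  then have e_min: "exp (- min a1 a2) \<le> e" by (cases "a1 \<le> a2") (auto simp: min_def)
  have diff: "a1 - a2 = ((2 * h + h^2) * u - 2 * h * (x \<bullet> y)) / 2"
    unfolding a1_def a2_def norm_scale_diff_sq by (simp add: u_def power2_eq_square field_simps)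
  have xy: "2 * \<bar>x \<bullet> y\<bar> \<le> (norm x)^2 + u"
    using Cauchy_Schwarz_ineq2[of x y] sum_squares_bound[of "norm x" "norm y"]
    by (simp add: u_def power2_eq_square)
  have hu: "(2 * h + h^2) * u \<le> 3 * h * u"
    using h u0 by (intro mult_right_mono) (auto simp: power2_eq_square)
  have "\<bar>a1 - a2\<bar> \<le> ((2 * h + h^2) * u + h * (2 * \<bar>x \<bullet> y\<bar>)) / 2"
  proof -
    have "h * (x \<bullet> y) \<le> h * \<bar>x \<bullet> y\<bar>" "- (h * (x \<bullet> y)) \<le> h * \<bar>x \<bullet> y\<bar>"
      using mult_left_mono[OF abs_ge_self[of "x \<bullet> y"], of h]
        mult_left_mono[OF abs_ge_minus_self[of "x \<bullet> y"], of h] h by auto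
    moreover have "0 \<le> (2 * h + h^2) * u" using h u0 by simp
    ultimately show ?thesis unfolding diff abs_le_iff by (simp add: field_simps)
  qed
  moreover have "h * (2 * \<bar>x \<bullet> y\<bar>) \<le> h * ((norm x)^2 + u)"
    using xy h by (intro mult_left_mono) auto
  ultimately have "\<bar>a1 - a2\<bar> \<le> (3 * h * u + h * ((norm x)^2 + u)) / 2"
    using hu by (smt (verit) divide_right_mono)
  also have "\<dots> = h * (2 * u + (norm x)^2 / 2)" by (simp add: algebra_simps)
  finally have ad: "\<bar>a1 - a2\<bar> \<le> h * (2 * u + (norm x)^2 / 2)" .
  have "\<bar>exp (- a1) - exp (- a2)\<bar> \<le> \<bar>a1 - a2\<bar> * exp (- min a1 a2)"
    by (rule exp_diff_bound)
  also have "\<dots> \<le> h * (2 * u + (norm x)^2 / 2) * e"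
    using ad e_min by (intro mult_mono) auto
  finally show ?thesis by (simp add: gauss_kernel_def a1_def a2_def e_def u_def)
qed

(* The difference quotients of r |-> integral of Phi(r y) converge to -B times the integral of Phi,
   the derivative of r^(-B) at r = 1. *)
lemma dilation_difference_quotient:
  fixes \<Phi> :: "'a::euclidean_space \<Rightarrow> real"
  assumes [measurable]: "\<Phi> \<in> borel_measurable borel"
    and int: "integrable lborel \<Phi>" "\<And>n. integrable lborel (\<lambda>y. \<Phi> ((1 + 1 / real (Suc n)) *\<^sub>R y))"
  shows "(\<lambda>n. \<integral>y. (\<Phi> ((1 + 1 / real (Suc n)) *\<^sub>R y) - \<Phi> y) / (1 / real (Suc n)) \<partial>lborel)
           \<longlonglongrightarrow> - real DIM('a) * (\<integral>y. \<Phi> y \<partial>lborel)"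
proof -
  have dinv: "((\<lambda>r. inverse (r ^ DIM('a))) has_real_derivative - real DIM('a)) (at 1)"
    by (auto intro!: derivative_eq_intros)
  have "(\<integral>y. (\<Phi> (lam *\<^sub>R y) - \<Phi> y) / (1 / real (Suc n)) \<partial>lborel)
        = (inverse (lam ^ DIM('a)) - inverse (1 ^ DIM('a))) / (1 / real (Suc n)) * (\<integral>y. \<Phi> y \<partial>lborel)"
    if lam: "lam = 1 + 1 / real (Suc n)" for n lam
  proof -
    have "lam > 0" using lam by (simp add: add_pos_pos)
    then show ?thesis
      using int lam
      by (simp add: integral_dilation[OF assms(1)] diff_divide_distrib left_diff_distrib)
  qed
  then show ?thesis
    using deriv_seq[OF dinv] by (simp only:) (intro tendsto_mult tendsto_const, simp)
qed

(* A radial profile t with derivative tp, smooth away from the single kink c, taking values in [0,1],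
   with relative Lipschitz bound and |u tp(u)| <= 1.  These are the hypotheses under which the
   vector field y |-> t(|y|^2) y satisfies Stein's identity. *)
locale radial_profile =
  fixes t tp :: "real \<Rightarrow> real" and c :: real
  assumes t_measurable [measurable]: "t \<in> borel_measurable borel"
    and tp_measurable [measurable]: "tp \<in> borel_measurable borel"
    and kink_pos: "0 < c"
    and t_range: "\<And>u. 0 \<le> u \<Longrightarrow> 0 \<le> t u \<and> t u \<le> 1"
    and t_lipschitz: "\<And>u v. 0 < u \<Longrightarrow> u \<le> v \<Longrightarrow> \<bar>t v - t u\<bar> \<le> (v - u) / v"
    and t_deriv: "\<And>u. 0 < u \<Longrightarrow> u \<noteq> c \<Longrightarrow> (t has_real_derivative tp u) (at u)"
    and tp_bound: "\<And>u. 0 \<le> u \<Longrightarrow> \<bar>u * tp u\<bar> \<le> 1"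
begin

lemma profile_dilation_increment:
  assumes u: "0 \<le> u" and h: "0 < h" "h \<le> 1"
  shows "\<bar>t ((1 + h)^2 * u) - t u\<bar> \<le> 3 * h"
proof (cases "u = 0")
  case False
  define l where "l = 1 + h"
  have up: "0 < u" using u False by simp
  have l0: "l \<noteq> 0" using h by (simp add: l_def)
  have l1: "1 \<le> l^2" using h by (simp add: l_def power2_eq_square algebra_simps)
  then have "u \<le> l^2 * u" using up by simp
  then have "\<bar>t (l^2 * u) - t u\<bar> \<le> (l^2 * u - u) / (l^2 * u)" using t_lipschitz[OF up] by simp
  also have "\<dots> = (l^2 - 1) / l^2"
    using up l0 by (simp add: divide_simps algebra_simps)
  also have "\<dots> \<le> l^2 - 1" using l0 l1 by (simp add: divide_le_eq mult_le_cancel_left1)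
  also have "\<dots> \<le> 3 * h" using h by (simp add: l_def power2_eq_square algebra_simps)
  finally show ?thesis by (simp add: l_def)
qed (use h in simp)

lemma dilated_field_increment:
  fixes x y :: "'a::real_inner"
  assumes h: "0 < h" "h \<le> 1"
  shows "\<bar>t ((norm ((1 + h) *\<^sub>R y))^2) * gauss_kernel x ((1 + h) *\<^sub>R y) - t ((norm y)^2) * gauss_kernel x y\<bar>
     \<le> h * ((3 + (norm x)^2) * exp ((norm x)^2 / 2) * (1 + (norm y)^2) * exp (- ((norm y)^2) / 4))"
proof -
  define l where "l = 1 + h"
  define u where "u = (norm y)^2"
  define e where "e = exp ((norm x)^2 / 2) * exp (- u / 4)"
  define g where "g = gauss_kernel x (l *\<^sub>R y)"
  have u0: "0 \<le> u" by (simp add: u_def)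
  have e0: "0 \<le> e" by (simp add: e_def)
  have nl: "(norm (l *\<^sub>R y))^2 = l^2 * u" using h by (simp add: l_def u_def power_mult_distrib)
  have tu: "0 \<le> t u" "t u \<le> 1" using t_range[OF u0] by auto
  have g: "0 < g" "g \<le> e"
    using gauss_kernel_pos gauss_kernel_dilation_bound[of l x y] h by (auto simp: g_def l_def e_def u_def)
  have lhs: "t ((norm (l *\<^sub>R y))^2) * gauss_kernel x (l *\<^sub>R y) = t (l^2 * u) * g"
    by (simp only: nl g_def)
  have "\<bar>t (l^2 * u) * g - t u * gauss_kernel x y\<bar>
      = \<bar>(t (l^2 * u) - t u) * g + t u * (g - gauss_kernel x y)\<bar>"
    by (simp add: algebra_simps)
  also have "\<dots> \<le> \<bar>(t (l^2 * u) - t u) * g\<bar> + \<bar>t u * (g - gauss_kernel x y)\<bar>"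
    by (rule abs_triangle_ineq)
  also have "\<dots> = \<bar>t (l^2 * u) - t u\<bar> * g + t u * \<bar>g - gauss_kernel x y\<bar>"
    using g tu by (simp add: abs_mult)
  also have "\<dots> \<le> 3 * h * e + 1 * (h * (2 * u + (norm x)^2 / 2) * e)"
    using profile_dilation_increment[OF u0 h] gauss_kernel_dilation_increment[OF h, of x y] g tu h e0
    by (intro add_mono mult_mono) (auto simp: l_def g_def e_def u_def)
  also have "\<dots> = h * ((3 + 2 * u + (norm x)^2 / 2) * e)" by (simp add: algebra_simps)
  also have "\<dots> \<le> h * ((3 + (norm x)^2) * (1 + u) * e)"
  proof -
    have "3 + 2 * u + (norm x)^2 / 2 \<le> (3 + (norm x)^2) * (1 + u)"
      using u0 mult_nonneg_nonneg[OF zero_le_power2[of "norm x"] u0] by (simp add: algebra_simps)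
    then show ?thesis using h e0 by (intro mult_left_mono mult_right_mono) auto
  qed
  finally show ?thesis
    unfolding l_def[symmetric] lhs by (simp add: e_def u_def mult_ac)
qed

lemma dilated_field_derivative:
  fixes x y :: "'a::real_inner"
  assumes y: "y \<noteq> 0" "(norm y)^2 \<noteq> c"
  shows "((\<lambda>r. t ((norm (r *\<^sub>R y))^2) * gauss_kernel x (r *\<^sub>R y)) has_real_derivative
           (2 * (norm y)^2 * tp ((norm y)^2) - t ((norm y)^2) * (y \<bullet> (y - x))) * gauss_kernel x y) (at 1)"
proof -
  define u where "u = (norm y)^2"
  define q where "q r = r^2 * u - 2 * r * (x \<bullet> y) + (norm x)^2" for r
  have u0: "0 < u" using y by (simp add: u_def)
  have field: "(\<lambda>r. t ((norm (r *\<^sub>R y))^2) * gauss_kernel x (r *\<^sub>R y)) = (\<lambda>r. t (r^2 * u) * exp (- q r / 2))"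
    by (simp add: gauss_kernel_def norm_scale_diff_sq power_mult_distrib u_def q_def)
  have "(t has_real_derivative tp u) (at ((\<lambda>r. r^2 * u) 1))"
    using t_deriv[OF u0] y(2) by (simp add: u_def)
  moreover have "((\<lambda>r. r^2 * u) has_real_derivative 2 * u) (at 1)"
    by (auto intro!: derivative_eq_intros)
  ultimately have dt: "((\<lambda>r. t (r^2 * u)) has_real_derivative tp u * (2 * u)) (at 1)"
    by (rule DERIV_chain2)
  have de: "((\<lambda>r. exp (- q r / 2)) has_real_derivative exp (- q 1 / 2) * (- (2 * u - 2 * (x \<bullet> y)) / 2)) (at 1)"
    unfolding q_def by (auto intro!: derivative_eq_intros)
  have kernel: "exp (- q 1 / 2) = gauss_kernel x y"
    using norm_scale_diff_sq[of 1 y x] by (simp add: gauss_kernel_def q_def u_def)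
  have yx: "y \<bullet> (y - x) = u - x \<bullet> y"
    by (simp add: u_def inner_diff_right inner_commute power2_norm_eq_inner)
  have "t u * (exp (- q 1 / 2) * (- (2 * u - 2 * (x \<bullet> y)) / 2)) + tp u * (2 * u) * exp (- q 1 / 2)
      = (2 * u * tp u - t u * (u - x \<bullet> y)) * gauss_kernel x y"
    unfolding kernel by (simp add: field_simps)
  then show ?thesis
    unfolding field yx u_def[symmetric] by (intro DERIV_cong[OF DERIV_mult'[OF dt de]]) simp
qed

lemma integrable_stein_lhs:
  fixes x :: "'a::euclidean_space"
  shows "integrable lborel (\<lambda>y. t ((norm y)^2) * (y \<bullet> (y - x)) * gauss_kernel x y)"
proof (rule integrable_quadratic_growth[where M="2 + (norm x)^2"])
  fix y :: 'a
  have "\<bar>t ((norm y)^2) * (y \<bullet> (y - x))\<bar> \<le> 1 * \<bar>y \<bullet> (y - x)\<bar>"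
    using t_range[of "(norm y)^2"] by (simp add: abs_mult mult_left_le_one_le)
  also have "\<dots> \<le> (2 + (norm x)^2) * (1 + (norm y)^2)" using inner_le_bound[of y x] by simp
  finally show "\<bar>t ((norm y)^2) * (y \<bullet> (y - x))\<bar> \<le> (2 + (norm x)^2) * (1 + (norm y)^2)" .
qed measurable

lemma integrable_stein_rhs:
  fixes x :: "'a::euclidean_space"
  shows "integrable lborel (\<lambda>y. (DIM('a) * t ((norm y)^2) + 2 * (norm y)^2 * tp ((norm y)^2)) * gauss_kernel x y)"
proof (rule integrable_quadratic_growth[where M="real DIM('a) + 2"])
  fix y :: 'a
  have "\<bar>DIM('a) * t ((norm y)^2) + 2 * ((norm y)^2 * tp ((norm y)^2))\<bar> \<le> real DIM('a) * 1 + 2 * 1"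
    using t_range[of "(norm y)^2"] tp_bound[of "(norm y)^2"]
    by (intro order_trans[OF abs_triangle_ineq] add_mono) (auto simp: abs_mult)
  also have "\<dots> \<le> (real DIM('a) + 2) * (1 + (norm y)^2)" by (simp add: algebra_simps)
  finally show "\<bar>DIM('a) * t ((norm y)^2) + 2 * (norm y)^2 * tp ((norm y)^2)\<bar> \<le> (real DIM('a) + 2) * (1 + (norm y)^2)"
    by (simp add: mult.assoc)
qed measurable

lemma integrable_dilated_field:
  fixes x :: "'a::euclidean_space"
  assumes \<mu>: "1 \<le> \<mu>"
  shows "integrable lborel (\<lambda>y. t ((norm (\<mu> *\<^sub>R y))^2) * gauss_kernel x (\<mu> *\<^sub>R y))"
proof (rule integrable_gaussian_envelope[where A="exp ((norm x)^2 / 2)"])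
  fix y :: 'a
  have "\<bar>t ((norm (\<mu> *\<^sub>R y))^2) * gauss_kernel x (\<mu> *\<^sub>R y)\<bar> \<le> gauss_kernel x (\<mu> *\<^sub>R y)"
    using t_range[of "(norm (\<mu> *\<^sub>R y))^2"] gauss_kernel_pos[of x "\<mu> *\<^sub>R y"]
    by (auto simp: abs_mult intro!: mult_left_le_one_le)
  also have "\<dots> \<le> exp ((norm x)^2 / 2) * exp (- ((norm y)^2) / 4)"
    by (rule gauss_kernel_dilation_bound[OF \<mu>])
  also have "\<dots> \<le> exp ((norm x)^2 / 2) * (1 + (norm y)^2) * exp (- ((norm y)^2) / 4)"
    by (intro mult_right_mono) auto
  finally show "\<bar>t ((norm (\<mu> *\<^sub>R y))^2) * gauss_kernel x (\<mu> *\<^sub>R y)\<bar>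
      \<le> exp ((norm x)^2 / 2) * (1 + (norm y)^2) * exp (- ((norm y)^2) / 4)" .
qed measurable

(* The difference quotients Q n
   of the dilated field converge almost everywhere to its derivative L at r = 1 and are dominated
   by W, so the integral of L is the derivative of r^(-B) times the integral of the field. *)
lemma stein_identity:
  fixes x :: "'a::euclidean_space"
  shows "(\<integral>y. t ((norm y)^2) * (y \<bullet> (y - x)) * gauss_kernel x y \<partial>lborel) =
         (\<integral>y. (DIM('a) * t ((norm y)^2) + 2 * (norm y)^2 * tp ((norm y)^2)) * gauss_kernel x y \<partial>lborel)"
proof -
  define \<Phi> where "\<Phi> y = t ((norm y)^2) * gauss_kernel x y" for y :: 'a
  define L where "L y = (2 * (norm y)^2 * tp ((norm y)^2) - t ((norm y)^2) * (y \<bullet> (y - x))) * gauss_kernel x y"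
    for y :: 'a
  define W where "W y = (3 + (norm x)^2) * exp ((norm x)^2 / 2) * (1 + (norm y)^2) * exp (- ((norm y)^2) / 4)"
    for y :: 'a
  define Q where "Q n y = (\<Phi> ((1 + 1 / real (Suc n)) *\<^sub>R y) - \<Phi> y) / (1 / real (Suc n))" for n y
  have [measurable]: "\<Phi> \<in> borel_measurable borel" "L \<in> borel_measurable borel" "W \<in> borel_measurable borel"
    "Q n \<in> borel_measurable borel" for n
    unfolding \<Phi>_def[abs_def] L_def[abs_def] W_def[abs_def] Q_def[abs_def] by measurable
  have int_W: "integrable lborel W"
    by (rule integrable_gaussian_envelope) (auto simp: W_def abs_mult)
  have int_\<Phi>: "integrable lborel (\<lambda>y. \<Phi> (\<mu> *\<^sub>R y))" if "1 \<le> \<mu>" for \<mu>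
    unfolding \<Phi>_def by (rule integrable_dilated_field[OF that])
  have Q_bound: "norm (Q n y) \<le> W y" for n y
  proof -
    have quotient: "\<bar>d / h\<bar> \<le> w" if "0 < h" "\<bar>d\<bar> \<le> h * w" for d h w :: real
      using that by (simp add: abs_divide pos_divide_le_eq mult.commute)
    have "\<bar>\<Phi> ((1 + 1 / real (Suc n)) *\<^sub>R y) - \<Phi> y\<bar> \<le> 1 / real (Suc n) * W y"
      unfolding \<Phi>_def W_def by (rule dilated_field_increment) auto
    then show ?thesis unfolding Q_def real_norm_def by (intro quotient) auto
  qed
  have Q_lim: "AE y in lborel. (\<lambda>n. Q n y) \<longlonglongrightarrow> L y"
    using AE_lborel_singleton[of "0::'a"] AE_not_sphere[of "sqrt c", where 'a='a]
  proof eventually_elim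
    case (elim y)
    then have "(norm y)^2 \<noteq> c" using kink_pos by auto
    from deriv_seq[OF dilated_field_derivative[OF elim(1) this, of x]]
    show ?case by (simp add: Q_def \<Phi>_def L_def)
  qed
  have int_L: "integrable lborel L"
    by (rule integrable_dominated_convergence[where w=W and s=Q]) (use int_W Q_lim Q_bound in auto)
  have "(\<lambda>n. \<integral>y. Q n y \<partial>lborel) \<longlonglongrightarrow> (\<integral>y. L y \<partial>lborel)"
    by (rule integral_dominated_convergence[where w=W]) (use int_W Q_lim Q_bound in auto)
  moreover have "(\<lambda>n. \<integral>y. Q n y \<partial>lborel) \<longlonglongrightarrow> - real DIM('a) * (\<integral>y. \<Phi> y \<partial>lborel)"
    unfolding Q_def using int_\<Phi>[of 1] int_\<Phi> by (intro dilation_difference_quotient) auto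
  ultimately have "(\<integral>y. L y \<partial>lborel) = - real DIM('a) * (\<integral>y. \<Phi> y \<partial>lborel)"
    by (rule LIMSEQ_unique)
  then have "(\<integral>y. real DIM('a) * \<Phi> y + L y \<partial>lborel) = 0"
    using int_L int_\<Phi>[of 1] by simp
  moreover have "(\<integral>y. real DIM('a) * \<Phi> y + L y \<partial>lborel)
      = (\<integral>y. (DIM('a) * t ((norm y)^2) + 2 * (norm y)^2 * tp ((norm y)^2)) * gauss_kernel x y \<partial>lborel)
        - (\<integral>y. t ((norm y)^2) * (y \<bullet> (y - x)) * gauss_kernel x y \<partial>lborel)"
    using integrable_stein_lhs[of x] integrable_stein_rhs[of x]
    by (simp add: \<Phi>_def L_def algebra_simps flip: Bochner_Integration.integral_diff)
  ultimately show ?thesis by simp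
qed

end

definition js_profile :: "real \<Rightarrow> real \<Rightarrow> real" where
  "js_profile c u = (if u \<le> c then 1 else c / u)"

definition js_profile_deriv :: "real \<Rightarrow> real \<Rightarrow> real" where
  "js_profile_deriv c u = (if u \<le> c then 0 else - c / u^2)"

definition js_estimator :: "real \<Rightarrow> 'a::real_normed_vector \<Rightarrow> 'a" where
  "js_estimator c y = (1 - js_profile c ((norm y)^2)) *\<^sub>R y"

lemma borel_measurable_js_profile [measurable]: "js_profile c \<in> borel_measurable borel"
  unfolding js_profile_def[abs_def] by measurable

lemma borel_measurable_js_profile_deriv [measurable]: "js_profile_deriv c \<in> borel_measurable borel"
  unfolding js_profile_deriv_def[abs_def] by measurable

lemma borel_measurable_js_estimator [measurable]:
  "js_estimator c \<in> borel_measurable (borel :: 'a::euclidean_space measure)"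
  unfolding js_estimator_def[abs_def] by measurable

lemma js_estimator_positive_part: "js_estimator c y = max 0 (1 - c / (norm y)^2) *\<^sub>R y"
proof (cases "y = 0")
  case False
  then have "(norm y)^2 > 0" by simp
  then have "1 - js_profile c ((norm y)^2) = max 0 (1 - c / (norm y)^2)"
    by (auto simp: js_profile_def le_divide_eq divide_less_eq)
  then show ?thesis by (simp add: js_estimator_def)
qed (simp add: js_estimator_def)

lemma james_stein_eq_js_estimator:
  "james_stein = (js_estimator (real CARD('n) - 2) :: real^'n::finite \<Rightarrow> real^'n)"
  by (simp add: fun_eq_iff james_stein_def js_estimator_positive_part)

lemma js_profile_range: "0 \<le> c \<Longrightarrow> 0 \<le> u \<Longrightarrow> 0 \<le> js_profile c u \<and> js_profile c u \<le> 1"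
  by (auto simp: js_profile_def)

lemma js_profile_lipschitz:
  assumes c: "0 < c" and uv: "0 < u" "u \<le> v"
  shows "\<bar>js_profile c v - js_profile c u\<bar> \<le> (v - u) / v"
proof -
  have v: "v > 0" using uv by simp
  consider "v \<le> c" | "u \<le> c" "c < v" | "c < u" by linarith
  then show ?thesis
  proof cases
    case 1 then show ?thesis using uv by (simp add: js_profile_def)
  next
    case 2
    then have "\<bar>js_profile c v - js_profile c u\<bar> = (v - c) / v" using v by (simp add: js_profile_def field_simps)
    also have "\<dots> \<le> (v - u) / v" using 2 v by (intro divide_right_mono) auto
    finally show ?thesis .
  next
    case 3
    then have "\<bar>js_profile c v - js_profile c u\<bar> = c / u - c / v" using uv c
      by (simp add: js_profile_def) (simp add: abs_if divide_left_mono field_simps)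
    also have "\<dots> = (c / u) * ((v - u) / v)" using uv by (simp add: field_simps)
    also have "\<dots> \<le> 1 * ((v - u) / v)" using 3 uv c by (intro mult_right_mono) auto
    finally show ?thesis by simp
  qed
qed

lemma js_profile_has_derivative:
  assumes "0 < u" "u \<noteq> c"
  shows "(js_profile c has_real_derivative js_profile_deriv c u) (at u)"
proof (cases "u < c")
  case True
  have "((\<lambda>_. 1) has_real_derivative js_profile_deriv c u) (at u)" using True by (simp add: js_profile_deriv_def)
  then show ?thesis
    by (rule has_field_derivative_transform_within_open[where S="{..<c}"])
       (use True in \<open>auto simp: js_profile_def\<close>)
next
  case False
  then have uc: "u > c" using assms by simp
  have "((\<lambda>v. c / v) has_real_derivative js_profile_deriv c u) (at u)"
    using assms uc by (auto intro!: derivative_eq_intros simp: power2_eq_square js_profile_deriv_def)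
  then show ?thesis
    by (rule has_field_derivative_transform_within_open[where S="{c<..}"])
       (use uc in \<open>auto simp: js_profile_def\<close>)
qed

lemma radial_profile_js:
  assumes c: "0 < c"
  shows "radial_profile (js_profile c) (js_profile_deriv c) c"
proof
  show "\<bar>u * js_profile_deriv c u\<bar> \<le> 1" if "0 \<le> u" for u
    using that c by (auto simp: js_profile_deriv_def power2_eq_square abs_mult divide_le_eq)
qed (use c in \<open>auto simp: js_profile_range js_profile_lipschitz js_profile_has_derivative\<close>)

lemma radial_profile_const: "radial_profile (\<lambda>_. 1) (\<lambda>_. 0) 1"
  by unfold_locales auto

(* E|Y - x|^2 = B, i.e. Stein's identity for the constant profile. *)
lemma second_moment_gauss_kernel:
  fixes x :: "'a::euclidean_space"
  shows "(\<integral>y. (norm (y - x))^2 * gauss_kernel x y \<partial>lborel) = real DIM('a) * (\<integral>y. gauss_kernel (0::'a) y \<partial>lborel)"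
proof -
  have "(\<integral>y. (norm (y - x))^2 * gauss_kernel x y \<partial>lborel)
      = (\<integral>z. (norm ((x + z) - x))^2 * gauss_kernel x (x + z) \<partial>lborel)"
    by (rule integral_shift[symmetric]) measurable
  also have "\<dots> = (\<integral>z. (norm (z::'a))^2 * gauss_kernel 0 z \<partial>lborel)"
    by (simp add: gauss_kernel_def)
  also have "\<dots> = (\<integral>z. 1 * ((z::'a) \<bullet> (z - 0)) * gauss_kernel 0 z \<partial>lborel)"
    by (simp add: power2_norm_eq_inner)
  also have "\<dots> = (\<integral>z. (real DIM('a) * 1 + 2 * (norm (z::'a))^2 * 0) * gauss_kernel 0 z \<partial>lborel)"
    by (rule radial_profile.stein_identity[OF radial_profile_const])
  finally show ?thesis by simp
qed

(* The integrand of Stein's unbiased risk estimate beyond the constant B, as a function of u = |y|^2. *)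
definition sure_excess :: "real \<Rightarrow> real \<Rightarrow> real" where
  "sure_excess c u = (js_profile c u)^2 * u - 2 * (c + 2) * js_profile c u - 4 * u * js_profile_deriv c u"

(* Shrinkage never hurts: the excess is nonpositive (it equals -c^2/u beyond the kink). *)
lemma sure_excess_nonpos:
  assumes c: "0 < c" and u: "0 \<le> u"
  shows "sure_excess c u \<le> 0"
proof (cases "u \<le> c")
  case False
  then have "sure_excess c u = - (c^2 / u)"
    using c by (simp add: sure_excess_def js_profile_def js_profile_deriv_def field_simps power2_eq_square)
  then show ?thesis using False c by simp
qed (use c in \<open>simp add: sure_excess_def js_profile_def js_profile_deriv_def\<close>)

lemma sure_excess_lower:
  assumes c: "0 < c" and u: "0 \<le> u"
  shows "- 2 * (c + 2) \<le> sure_excess c u"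
proof -
  have "0 \<le> (js_profile c u)^2 * u" "0 \<le> - (4 * u * js_profile_deriv c u)"
    using u c by (auto simp: js_profile_deriv_def)
  moreover have "2 * (c + 2) * js_profile c u \<le> 2 * (c + 2)"
    using js_profile_range[of c u] c u by (simp add: mult_left_le)
  ultimately show ?thesis unfolding sure_excess_def by linarith
qed

(* For x = 0, where y.(y - x) = |y|^2, subtracting the mean-zero Stein term from the excess
   leaves at most -c. *)
lemma sure_excess_at_origin:
  assumes c: "0 < c" and u: "0 \<le> u"
  shows "sure_excess c u - (js_profile c u * u - ((c + 2) * js_profile c u + 2 * u * js_profile_deriv c u)) \<le> - c"
proof (cases "u \<le> c")
  case False
  then show ?thesis
    using c by (simp add: sure_excess_def js_profile_def js_profile_deriv_def field_simps power2_eq_square)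
qed (use c in \<open>simp add: sure_excess_def js_profile_def js_profile_deriv_def\<close>)

lemma norm_js_estimator_le: "0 \<le> c \<Longrightarrow> norm (js_estimator c y) \<le> norm y"
  using js_profile_range[of c "(norm y)^2"] by (simp add: js_estimator_def mult_left_le_one_le)

lemma integrable_contraction_loss:
  fixes x :: "'a::euclidean_space" and f :: "'a \<Rightarrow> 'a"
  assumes [measurable]: "f \<in> borel_measurable borel" and contraction: "\<And>y. norm (f y) \<le> norm y"
  shows "integrable lborel (\<lambda>y. (norm (x - f y))^2 * gauss_kernel x y)"
proof (rule integrable_quadratic_growth[where M="2 + 2 * (norm x)^2"])
  fix y :: 'a
  have "norm (x - f y) \<le> norm x + norm y"
    using norm_triangle_ineq4[of x "f y"] contraction[of y] by linarith
  then have "(norm (x - f y))^2 \<le> (norm x + norm y)^2" by (simp add: power_mono)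
  also have "\<dots> \<le> 2 * (norm x)^2 + 2 * (norm y)^2"
    using zero_le_power2[of "norm x - norm y"] unfolding power2_sum power2_diff by linarith
  also have "\<dots> \<le> (2 + 2 * (norm x)^2) * (1 + (norm y)^2)"
    using mult_nonneg_nonneg[OF zero_le_power2[of "norm x"] zero_le_power2[of "norm y"]]
    by (simp add: algebra_simps)
  finally show "\<bar>(norm (x - f y))^2\<bar> \<le> (2 + 2 * (norm x)^2) * (1 + (norm y)^2)" by simp
qed measurable

lemma integrable_sure_excess:
  fixes x :: "'a::euclidean_space"
  assumes c: "0 < c"
  shows "integrable lborel (\<lambda>y. sure_excess c ((norm y)^2) * gauss_kernel x y)"
proof (rule integrable_quadratic_growth[where M="2 * (c + 2)"])
  fix y :: 'a
  have "\<bar>sure_excess c ((norm y)^2)\<bar> \<le> 2 * (c + 2)"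
    using sure_excess_nonpos[OF c, of "(norm y)^2"] sure_excess_lower[OF c, of "(norm y)^2"] by simp
  also have "\<dots> \<le> 2 * (c + 2) * (1 + (norm y)^2)"
    using c by (simp add: mult_le_cancel_left1)
  finally show "\<bar>sure_excess c ((norm y)^2)\<bar> \<le> 2 * (c + 2) * (1 + (norm y)^2)" .
qed (simp add: sure_excess_def[abs_def])

lemma js_sure_formula:
  fixes x :: "'a::euclidean_space"
  assumes c: "0 < c" "real DIM('a) = c + 2"
  shows "(\<integral>y. (norm (x - js_estimator c y))^2 * gauss_kernel x y \<partial>lborel)
       = real DIM('a) * (\<integral>y. gauss_kernel (0::'a) y \<partial>lborel)
         + (\<integral>y. sure_excess c ((norm y)^2) * gauss_kernel x y \<partial>lborel)"
proof -
  interpret radial_profile "js_profile c" "js_profile_deriv c" c by (rule radial_profile_js[OF c(1)])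
  define A where "A y = (norm (y - x))^2 * gauss_kernel x y" for y
  define B where "B y = js_profile c ((norm y)^2) * (y \<bullet> (y - x)) * gauss_kernel x y" for y
  define C where "C y = (DIM('a) * js_profile c ((norm y)^2) + 2 * (norm y)^2 * js_profile_deriv c ((norm y)^2))
                          * gauss_kernel x y" for y
  define H where "H y = sure_excess c ((norm y)^2) * gauss_kernel x y" for y
  have "integrable lborel A"
    unfolding A_def using integrable_contraction_loss[of id x] by (simp add: norm_minus_commute)
  moreover have "integrable lborel B" "integrable lborel C" "integrable lborel H"
    unfolding B_def C_def H_def using integrable_stein_lhs integrable_stein_rhs integrable_sure_excess[OF c(1)]
    by auto
  moreover have "(norm (x - js_estimator c y))^2 * gauss_kernel x y = A y - 2 * (B y - C y) + H y" for y
  proof -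
    have "(norm (x - js_estimator c y))^2 = (norm (y - x))^2 - 2 * js_profile c ((norm y)^2) * (y \<bullet> (y - x))
            + (js_profile c ((norm y)^2))^2 * (norm y)^2"
      unfolding js_estimator_def power2_norm_eq_inner
      by (simp add: inner_diff_left inner_diff_right inner_commute algebra_simps power2_eq_square)
    moreover have "A y - 2 * (B y - C y) + H y = ((norm (y - x))^2 - 2 * js_profile c ((norm y)^2) * (y \<bullet> (y - x))
            + (js_profile c ((norm y)^2))^2 * (norm y)^2) * gauss_kernel x y"
      by (simp add: A_def B_def C_def H_def sure_excess_def c(2) algebra_simps)
    ultimately show ?thesis by simp
  qed
  ultimately have "(\<integral>y. (norm (x - js_estimator c y))^2 * gauss_kernel x y \<partial>lborel)
      = (\<integral>y. A y \<partial>lborel) - 2 * ((\<integral>y. B y \<partial>lborel) - (\<integral>y. C y \<partial>lborel)) + (\<integral>y. H y \<partial>lborel)"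
    by simp
  moreover have "(\<integral>y. B y \<partial>lborel) = (\<integral>y. C y \<partial>lborel)"
    unfolding B_def C_def by (rule stein_identity)
  ultimately show ?thesis using second_moment_gauss_kernel[of x] by (simp add: A_def H_def)
qed

lemma js_risk_le_dim:
  fixes x :: "'a::euclidean_space"
  assumes c: "0 < c" "real DIM('a) = c + 2"
  shows "(\<integral>y. (norm (x - js_estimator c y))^2 * gauss_kernel x y \<partial>lborel)
           \<le> real DIM('a) * (\<integral>y. gauss_kernel (0::'a) y \<partial>lborel)"
proof -
  have "0 \<le> (\<integral>y. - (sure_excess c ((norm y)^2) * gauss_kernel x y) \<partial>lborel)"
    using sure_excess_nonpos[OF c(1)] gauss_kernel_pos[of x]
    by (intro Bochner_Integration.integral_nonneg) (simp add: mult_nonpos_nonneg less_imp_le)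
  then show ?thesis using js_sure_formula[OF c, of x] by simp
qed

lemma js_risk_at_origin:
  assumes c: "0 < c" "real DIM('a::euclidean_space) = c + 2"
  shows "(\<integral>y. (norm (js_estimator c y))^2 * gauss_kernel (0::'a) y \<partial>lborel)
           \<le> 2 * (\<integral>y. gauss_kernel (0::'a) y \<partial>lborel)"
proof -
  interpret radial_profile "js_profile c" "js_profile_deriv c" c by (rule radial_profile_js[OF c(1)])
  define H where "H y = sure_excess c ((norm y)^2) * gauss_kernel 0 y" for y :: 'a
  define R where "R y = js_profile c ((norm y)^2) * (y \<bullet> (y - 0)) * gauss_kernel 0 y
      - (DIM('a) * js_profile c ((norm y)^2) + 2 * (norm y)^2 * js_profile_deriv c ((norm y)^2)) * gauss_kernel 0 y"
    for y :: 'a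
  have int_H: "integrable lborel H" unfolding H_def by (rule integrable_sure_excess[OF c(1)])
  have int_R: "integrable lborel R"
    unfolding R_def using integrable_stein_lhs[of "0::'a"] integrable_stein_rhs[of "0::'a"] by auto
  have mean_R: "(\<integral>y. R y \<partial>lborel) = 0"
    unfolding R_def using integrable_stein_lhs[of "0::'a"] integrable_stein_rhs[of "0::'a"] stein_identity[of "0::'a"]
    by simp
  have "H y - R y \<le> - c * gauss_kernel 0 y" for y
  proof -
    define u where "u = (norm y)^2"
    have "H y - R y = (sure_excess c u - (js_profile c u * u
            - ((c + 2) * js_profile c u + 2 * u * js_profile_deriv c u))) * gauss_kernel 0 y"
      by (simp add: H_def R_def u_def c(2) power2_norm_eq_inner algebra_simps)
    also have "\<dots> \<le> - c * gauss_kernel 0 y"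
      using sure_excess_at_origin[OF c(1), of u] gauss_kernel_pos[of 0 y]
      by (intro mult_right_mono) (auto simp: u_def)
    finally show ?thesis .
  qed
  then have "(\<integral>y. H y - R y \<partial>lborel) \<le> (\<integral>y. - c * gauss_kernel (0::'a) y \<partial>lborel)"
    using int_H int_R integrable_gauss_kernel[of "0::'a"] by (intro Bochner_Integration.integral_mono) auto
  then have "(\<integral>y. H y \<partial>lborel) \<le> - c * (\<integral>y. gauss_kernel (0::'a) y \<partial>lborel)"
    using int_H int_R mean_R by simp
  then show ?thesis using js_sure_formula[OF c, of 0] by (simp add: H_def c(2) algebra_simps)
qed

lemma nn_integral_std_gauss_shift:
  fixes x :: "real^'n::finite" and f :: "real^'n \<Rightarrow> real"
  assumes [measurable]: "f \<in> borel_measurable borel" and nonneg: "\<And>y. 0 \<le> f y"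
    and int: "integrable lborel (\<lambda>y. f y * gauss_kernel x y)"
  shows "(\<integral>\<^sup>+ z. ennreal (f (x + z)) \<partial>std_gauss)
           = ennreal ((2 * pi) powr (- real CARD('n) / 2) * (\<integral>y. f y * gauss_kernel x y \<partial>lborel))"
proof -
  define K where "K = (2 * pi) powr (- real CARD('n) / 2)"
  have K: "0 < K" by (simp add: K_def)
  have "(\<integral>\<^sup>+ z. ennreal (f (x + z)) \<partial>std_gauss)
      = (\<integral>\<^sup>+ z. ennreal (K * exp (- ((norm z)^2) / 2)) * ennreal (f (x + z)) \<partial>lborel)"
    unfolding std_gauss_def K_def by (subst nn_integral_density) auto
  also have "\<dots> = (\<integral>\<^sup>+ z. ennreal (K * (f (x + z) * gauss_kernel x (x + z))) \<partial>lborel)"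
    using K nonneg by (intro nn_integral_cong) (simp add: gauss_kernel_def ennreal_mult[symmetric] mult_ac)
  also have "\<dots> = (\<integral>\<^sup>+ y. ennreal (K * (f y * gauss_kernel x y)) \<partial>lborel)"
    by (rule nn_integral_shift) measurable
  also have "\<dots> = ennreal (\<integral>y. K * (f y * gauss_kernel x y) \<partial>lborel)"
    using int K nonneg gauss_kernel_pos[of x, THEN less_imp_le] by (intro nn_integral_eq_integral) (auto intro!: AE_I2)
  finally show ?thesis by (simp add: K_def)
qed

lemma point_risk_bound:
  fixes x :: "real^'n::finite"
  assumes "CARD('n) > 2"
  shows "(\<integral>\<^sup>+ z. ennreal ((norm (x - james_stein (x + z)))^2) \<partial>std_gauss)
           \<le> (if x = 0 then 2 else ennreal (real CARD('n)))"
proof -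
  define c where "c = real CARD('n) - 2"
  define K where "K = (2 * pi) powr (- real CARD('n) / 2)"
  define I0 where "I0 = (\<integral>y. gauss_kernel (0::real^'n) y \<partial>lborel)"
  define R where "R = (\<integral>y. (norm (x - js_estimator c y))^2 * gauss_kernel x y \<partial>lborel)"
  have c: "0 < c" "real DIM(real^'n) = c + 2" using assms by (auto simp: c_def)
  have K: "0 < K" "K * I0 = 1" using gauss_kernel_normalization[of "0::real^'n"] by (auto simp: K_def I0_def)
  have "(\<integral>\<^sup>+ z. ennreal ((norm (x - james_stein (x + z)))^2) \<partial>std_gauss) = ennreal (K * R)"
    unfolding james_stein_eq_js_estimator c_def[symmetric] K_def R_def
    using c(1) by (intro nn_integral_std_gauss_shift integrable_contraction_loss norm_js_estimator_le) auto
  moreover have "K * R \<le> b" if b: "b = (if x = 0 then 2 else real CARD('n))" for b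
  proof -
    have "R \<le> b * I0"
      using js_risk_le_dim[OF c, of x] js_risk_at_origin[OF c] by (auto simp: b R_def I0_def)
    then have "K * R \<le> K * (b * I0)" using K by (intro mult_left_mono) auto
    also have "\<dots> = b" using K(2) by (simp add: mult.left_commute)
    finally show ?thesis .
  qed
  ultimately show ?thesis
    using ennreal_leI[of "K * R" "if x = 0 then 2 else real CARD('n)"] by (cases "x = 0") auto
qed

lemma bayes_risk_sparse_prior:
  fixes \<nu> :: "(real^'n::finite) measure"
  assumes B: "CARD('n) > 2" and eps: "0 \<le> eps" and prior: "\<nu> \<in> sparse_priors eps"
  shows "js_risk \<nu> \<le> ennreal (2 + real CARD('n) * eps)"
proof -
  define B where "B = real CARD('n)"
  have prob: "prob_space \<nu>" and sets: "sets \<nu> = sets borel" and mass0: "measure \<nu> {0} \<ge> 1 - eps"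
    using prior by (auto simp: sparse_priors_def)
  interpret prob_space \<nu> by (rule prob)
  have [measurable]: "- {0::real^'n} \<in> sets \<nu>" "{0::real^'n} \<in> sets \<nu>" using sets by auto
  have "js_risk \<nu> \<le> (\<integral>\<^sup>+ x. (2 + ennreal B * indicator (- {0}) x) \<partial>\<nu>)"
    unfolding js_risk_def
  proof (rule nn_integral_mono)
    fix x :: "real^'n"
    have "(\<integral>\<^sup>+ z. ennreal ((norm (x - james_stein (x + z)))^2) \<partial>std_gauss)
        \<le> (if x = 0 then 2 else ennreal (real CARD('n)))" by (rule point_risk_bound[OF B])
    also have "\<dots> \<le> 2 + ennreal B * indicator (- {0}) x" by (auto simp: B_def)
    finally show "(\<integral>\<^sup>+ z. ennreal ((norm (x - james_stein (x + z)))^2) \<partial>std_gauss)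
        \<le> 2 + ennreal B * indicator (- {0}) x" .
  qed
  also have "\<dots> = 2 + ennreal B * emeasure \<nu> (- {0})"
    by (simp add: nn_integral_add nn_integral_cmult_indicator emeasure_space_1)
  also have "emeasure \<nu> (- {0}) = ennreal (1 - measure \<nu> {0})"
  proof -
    have "- {0::real^'n} = space \<nu> - {0}" using sets_eq_imp_space_eq[OF sets] by auto
    then show ?thesis using prob_compl[of "{0}"] by (simp add: emeasure_eq_measure)
  qed
  also have "ennreal (1 - measure \<nu> {0}) \<le> ennreal eps" using mass0 by (intro ennreal_leI) simp
  finally have "js_risk \<nu> \<le> 2 + ennreal B * ennreal eps"
    by (metis add_left_mono mult_left_mono order_trans zero_le)
  also have "\<dots> = ennreal (2 + B * eps)" using eps by (simp add: B_def ennreal_mult ennreal_plus[symmetric])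
  finally show ?thesis by (simp add: B_def)
qed

theorem mainTheorem5:
  fixes eps :: real
  assumes "CARD('n::finite) > 2"
    and "0 \<le> eps" and "eps \<le> 1"
  shows "minimax_JS eps TYPE('n) \<le> ennreal (eps + 2 / real CARD('n))"
proof -
  define B where "B = real CARD('n)"
  have B: "B > 2" using assms(1) by (simp add: B_def)
  have "minimax_JS eps TYPE('n) = ennreal (1 / B) * (SUP \<nu>\<in>(sparse_priors eps :: (real^'n) measure set). js_risk \<nu>)"
    by (simp add: minimax_JS_def B_def)
  also have "\<dots> \<le> ennreal (1 / B) * ennreal (2 + B * eps)"
    using bayes_risk_sparse_prior[OF assms(1,2)] by (intro mult_left_mono SUP_least) (auto simp: B_def)
  also have "\<dots> = ennreal ((1 / B) * (2 + B * eps))"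
    using B assms(2) by (subst ennreal_mult) auto
  also have "(1 / B) * (2 + B * eps) = eps + 2 / real CARD('n)"
    using B by (simp add: B_def field_simps)
  finally show ?thesis .
qed

end
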